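(* Let $G$ be a group with generating set $S$ not containing the identity, and let $g,h$ be distinct elements of $G$. Then $d_C(g,h)$ equals the minimum number of distinct colors of arcs occurring in an (undirected) path connecting $g$ and $h$ in the Cayley color digraph of $G$ with respect to $S$.
   Context: The cardinal norm is $\|x\| = \min\{|A| : A\subseteq S,\ x\in\langle A\rangle\}$, where $\langle A\rangle$ is the subgroup generated by $A$, and the cardinal metric is $d_C(g,h)=\|g^{-1}h\|$. The Cayley color digraph of $G$ with respect to $S$ has vertex set $G$, and for each $x\in G$ and $c\in S$ an arc $(x,xc)$ with color $c$ (distinct elements of $S$ are distinct colors). An undirected path from $g$ to $h$ is a sequence $g=x_0,e_1,x_1,\dots,e_n,x_n=h$ of vertices and arcs with $e_i\in\{(x_{i-1},x_i),(x_i,x_{i-1})\}$ for each $i$; its colors are the colors of the arcs $e_i$. *)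

theory Defs
  imports "HOL-Algebra.Algebra"
begin

text \<open>Only finite A need be considered: any element of a generated subgroup
lies in the subgroup generated by a finite subset, so an infinite A is never minimal.\<close>
definition cardinal_norm :: "('a, 'b) monoid_scheme \<Rightarrow> 'a set \<Rightarrow> 'a \<Rightarrow> nat" where
  "cardinal_norm G S x =
     (LEAST n. \<exists>A. A \<subseteq> S \<and> finite A \<and> card A = n \<and> x \<in> generate G A)"

definition cardinal_dist :: "('a, 'b) monoid_scheme \<Rightarrow> 'a set \<Rightarrow> 'a \<Rightarrow> 'a \<Rightarrow> nat" where
  "cardinal_dist G S g h = cardinal_norm G S (inv\<^bsub>G\<^esub> g \<otimes>\<^bsub>G\<^esub> h)"

text \<open>Undirected path in the Cayley color digraph of G w.r.t. S from g to h:
vertex list vs = [x_0,...,x_n], colour list cs = [c_1,...,c_n]; the i-th arc has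
colour c_i and is either (x_{i-1}, x_{i-1} c_i) with x_i = x_{i-1} c_i, or
(x_i, x_i c_i) with x_{i-1} = x_i c_i.\<close>
definition cayley_upath :: "('a, 'b) monoid_scheme \<Rightarrow> 'a set \<Rightarrow> 'a \<Rightarrow> 'a \<Rightarrow> 'a list \<Rightarrow> 'a list \<Rightarrow> bool" where
  "cayley_upath G S g h vs cs \<longleftrightarrow>
     length vs = Suc (length cs) \<and> set vs \<subseteq> carrier G \<and> set cs \<subseteq> S \<and>
     hd vs = g \<and> last vs = h \<and>
     (\<forall>i < length cs. vs ! Suc i = vs ! i \<otimes>\<^bsub>G\<^esub> cs ! i \<or> vs ! i = vs ! Suc i \<otimes>\<^bsub>G\<^esub> cs ! i)"

end

theory Submission
  imports Defs
begin

text \<open>Each arc of colour c changes a vertex x into x c or x c\<inverse>, so the colours of a path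
from g to h generate a subgroup containing g\<inverse>h. Conversely, writing g\<inverse>h as a word in
A \<union> A\<inverse> and reading it off letter by letter from g traces a path to h that uses only
colours from A.\<close>

lemma cayley_upath_Nil_iff:
  "cayley_upath G S a b vs [] \<longleftrightarrow> vs = [a] \<and> a = b \<and> a \<in> carrier G"
  by (cases vs) (auto simp: cayley_upath_def)

lemma cayley_upath_Cons_iff:
  "cayley_upath G S a b vs (c # cs) \<longleftrightarrow>
     (\<exists>v vs'. vs = a # v # vs' \<and> a \<in> carrier G \<and> c \<in> S \<and>
        (v = a \<otimes>\<^bsub>G\<^esub> c \<or> a = v \<otimes>\<^bsub>G\<^esub> c) \<and> cayley_upath G S v b (v # vs') cs)"
proof
  assume path: "cayley_upath G S a b vs (c # cs)"
  then obtain v vs' where "vs = a # v # vs'"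
    unfolding cayley_upath_def by (cases vs; cases "tl vs") auto
  with path show "\<exists>v vs'. vs = a # v # vs' \<and> a \<in> carrier G \<and> c \<in> S \<and>
      (v = a \<otimes>\<^bsub>G\<^esub> c \<or> a = v \<otimes>\<^bsub>G\<^esub> c) \<and> cayley_upath G S v b (v # vs') cs"
    unfolding cayley_upath_def by (auto simp: All_less_Suc2)
next
  assume "\<exists>v vs'. vs = a # v # vs' \<and> a \<in> carrier G \<and> c \<in> S \<and>
      (v = a \<otimes>\<^bsub>G\<^esub> c \<or> a = v \<otimes>\<^bsub>G\<^esub> c) \<and> cayley_upath G S v b (v # vs') cs"
  then show "cayley_upath G S a b vs (c # cs)"
    unfolding cayley_upath_def by (auto simp: All_less_Suc2)
qed

lemma cayley_upath_hd: "cayley_upath G S a b vs cs \<Longrightarrow> vs = a # tl vs"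
  by (cases cs) (auto simp: cayley_upath_Nil_iff cayley_upath_Cons_iff)

lemma cayley_upath_ends_in_carrier:
  assumes "cayley_upath G S a b vs cs"
  shows "a \<in> carrier G" "b \<in> carrier G"
proof -
  from assms have "vs \<noteq> []" "set vs \<subseteq> carrier G" "hd vs = a" "last vs = b"
    unfolding cayley_upath_def by auto
  then show "a \<in> carrier G" "b \<in> carrier G" by auto
qed

lemma cayley_upath_append:
  "cayley_upath G S a b vs cs \<Longrightarrow> cayley_upath G S b c ws ds \<Longrightarrow>
   cayley_upath G S a c (vs @ tl ws) (cs @ ds)"
proof (induction cs arbitrary: a vs)
  case Nil
  then show ?case by (metis cayley_upath_Nil_iff cayley_upath_hd append.left_neutral append_Cons)
next
  case (Cons e es)
  then obtain v vs' where vs: "vs = a # v # vs'" and "a \<in> carrier G" "e \<in> S"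
    and "v = a \<otimes>\<^bsub>G\<^esub> e \<or> a = v \<otimes>\<^bsub>G\<^esub> e" and rest: "cayley_upath G S v b (v # vs') es"
    by (auto simp: cayley_upath_Cons_iff)
  moreover have "cayley_upath G S v c ((v # vs') @ tl ws) (es @ ds)"
    using Cons.IH[OF rest Cons.prems(2)] .
  ultimately show ?case by (simp add: cayley_upath_Cons_iff)
qed

lemma cayley_upath_arc:
  "a \<in> carrier G \<Longrightarrow> b \<in> carrier G \<Longrightarrow> c \<in> S \<Longrightarrow> b = a \<otimes>\<^bsub>G\<^esub> c \<or> a = b \<otimes>\<^bsub>G\<^esub> c \<Longrightarrow>
   cayley_upath G S a b [a, b] [c]"
  by (simp add: cayley_upath_Cons_iff cayley_upath_Nil_iff)

lemma (in group) generate_imp_cayley_upath: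
  assumes "A \<subseteq> S" "S \<subseteq> carrier G" "y \<in> generate G A" "z \<in> carrier G"
  shows "\<exists>vs cs. cayley_upath G S z (z \<otimes> y) vs cs \<and> set cs \<subseteq> A"
  using assms(3,4)
proof (induction arbitrary: z rule: generate.induct)
  case one
  then show ?case by (intro exI[of _ "[z]"] exI[of _ "[]"]) (simp add: cayley_upath_Nil_iff)
next
  case (incl c)
  with assms(1,2) have "cayley_upath G S z (z \<otimes> c) [z, z \<otimes> c] [c]"
    by (intro cayley_upath_arc) auto
  with incl show ?case by fastforce
next
  case (inv c)
  with assms(1,2) have "cayley_upath G S z (z \<otimes> inv c) [z, z \<otimes> inv c] [c]"
    by (intro cayley_upath_arc) (auto simp: m_assoc)
  with inv show ?case by fastforce
next
  case (eng y1 y2)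
  have "y1 \<in> carrier G" "y2 \<in> carrier G"
    using eng.hyps assms(1,2) generate_in_carrier[of A] by auto
  moreover obtain vs cs where "cayley_upath G S z (z \<otimes> y1) vs cs" "set cs \<subseteq> A"
    using eng.IH(1) eng.prems by blast
  moreover obtain ws ds where "cayley_upath G S (z \<otimes> y1) (z \<otimes> y1 \<otimes> y2) ws ds" "set ds \<subseteq> A"
    using eng.IH(2) eng.prems calculation(1) by blast
  ultimately show ?case
    using cayley_upath_append eng.prems by (fastforce simp: m_assoc)
qed

lemma (in group) cayley_upath_imp_generate:
  assumes "S \<subseteq> carrier G" "cayley_upath G S g h vs cs"
  shows "inv g \<otimes> h \<in> generate G (set cs)"
  using assms(2)
proof (induction cs arbitrary: g vs)
  case Nil
  then show ?case by (auto simp: cayley_upath_Nil_iff generate.one)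
next
  case (Cons c cs)
  then obtain v vs' where g: "g \<in> carrier G" and c: "c \<in> S"
    and arc: "v = g \<otimes> c \<or> g = v \<otimes> c" and rest: "cayley_upath G S v h (v # vs') cs"
    by (auto simp: cayley_upath_Cons_iff)
  have v: "v \<in> carrier G" and h: "h \<in> carrier G"
    using cayley_upath_ends_in_carrier[OF rest] by auto
  let ?H = "generate G (set (c # cs))"
  have H: "subgroup ?H G"
    using assms(1) Cons.prems c by (intro generate_is_subgroup) (auto simp: cayley_upath_def)
  have "inv g \<otimes> v = c \<or> inv g \<otimes> v = inv c"
    using arc
  proof
    assume "v = g \<otimes> c"
    with g c assms(1) show ?thesis by (auto simp: m_assoc[symmetric])
  next
    assume "g = v \<otimes> c"
    with v c assms(1) show ?thesis by (auto simp: m_assoc inv_mult_group)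
  qed
  then have "inv g \<otimes> v \<in> ?H"
    by (auto intro: generate.incl generate.inv)
  moreover have "inv v \<otimes> h \<in> ?H"
    using Cons.IH[OF rest] mono_generate[of "set cs" "set (c # cs)"] by auto
  ultimately have "(inv g \<otimes> v) \<otimes> (inv v \<otimes> h) \<in> ?H"
    by (rule subgroup.m_closed[OF H])
  moreover have "(inv g \<otimes> v) \<otimes> (inv v \<otimes> h) = inv g \<otimes> h"
    using g v h by (metis inv_closed m_assoc m_closed r_inv l_one)
  ultimately show ?case by simp
qed

lemma (in group) generate_finite_subset:
  "y \<in> generate G S \<Longrightarrow> \<exists>A\<subseteq>S. finite A \<and> y \<in> generate G A"
proof (induction rule: generate.induct)
  case one
  then show ?case using generate.one by blast
next
  case (incl c)
  then show ?case by (intro exI[of _ "{c}"]) (auto intro: generate.incl)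
next
  case (inv c)
  then show ?case by (intro exI[of _ "{c}"]) (auto intro: generate.inv)
next
  case (eng y1 y2)
  then obtain A1 A2 where "A1 \<subseteq> S" "finite A1" "y1 \<in> generate G A1"
    and "A2 \<subseteq> S" "finite A2" "y2 \<in> generate G A2" by blast
  then show ?case
    using mono_generate[of A1 "A1 \<union> A2"] mono_generate[of A2 "A1 \<union> A2"]
    by (intro exI[of _ "A1 \<union> A2"]) (auto intro: generate.eng)
qed

lemma cardinal_norm_le:
  "A \<subseteq> S \<Longrightarrow> finite A \<Longrightarrow> x \<in> generate G A \<Longrightarrow> cardinal_norm G S x \<le> card A"
  unfolding cardinal_norm_def by (blast intro: Least_le)

lemma (in group) cardinal_norm_attained:
  assumes "x \<in> generate G S"
  shows "\<exists>A\<subseteq>S. finite A \<and> card A = cardinal_norm G S x \<and> x \<in> generate G A"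
proof -
  obtain A where "A \<subseteq> S" "finite A" "x \<in> generate G A"
    using generate_finite_subset[OF assms] by blast
  then show ?thesis
    unfolding cardinal_norm_def
    by (intro LeastI_ex[where P = "\<lambda>n. \<exists>A\<subseteq>S. finite A \<and> card A = n \<and> x \<in> generate G A"])
      blast
qed

theorem mainTheorem9:
  fixes G (structure) and S :: "'a set" and g h :: 'a
  assumes "group G" and "S \<subseteq> carrier G" and "generate G S = carrier G"
    and "\<one>\<^bsub>G\<^esub> \<notin> S"
    and "g \<in> carrier G" and "h \<in> carrier G" and "g \<noteq> h"
  shows "(\<exists>vs cs. cayley_upath G S g h vs cs \<and> card (set cs) = cardinal_dist G S g h) \<and>
         (\<forall>vs cs. cayley_upath G S g h vs cs \<longrightarrow> cardinal_dist G S g h \<le> card (set cs))"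
proof -
  interpret group G by (fact assms(1))
  have lower: "cardinal_dist G S g h \<le> card (set cs)" if "cayley_upath G S g h vs cs" for vs cs
    unfolding cardinal_dist_def using that assms(2)
    by (intro cardinal_norm_le cayley_upath_imp_generate) (auto simp: cayley_upath_def)
  obtain A where A: "A \<subseteq> S" "finite A" "card A = cardinal_dist G S g h"
    and gen: "inv g \<otimes> h \<in> generate G A"
    using cardinal_norm_attained[of "inv g \<otimes> h" S] assms(3,5,6)
    unfolding cardinal_dist_def by auto
  obtain vs cs where "cayley_upath G S g (g \<otimes> (inv g \<otimes> h)) vs cs" and "set cs \<subseteq> A"
    using generate_imp_cayley_upath[OF A(1) assms(2) gen assms(5)] by blast
  then have "cayley_upath G S g h vs cs" and "card (set cs) \<le> cardinal_dist G S g h"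
    using assms(5,6) A card_mono[OF A(2)] by (auto simp: m_assoc[symmetric])
  with lower show ?thesis by (meson le_antisym)
qed

end
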